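(* Let $\mathfrak{g}$ be the affine Lie algebra of type $D^{(1)}_4$ with the $\mathbb{Z}$-gradation of type $s=(1,1,0,1,1)$, grading element $d_s$, normalized invariant form $(\,|\,)$ and Heisenberg elements $\Lambda_{k,i}$ as described in the context. Let $W=W(t_{1,1},t_{1,2},t_{3,1},t_{3,2},\ldots)$ be a $G_{<0}$-valued (formal) function satisfying the Sato equations \[ \partial_{k,i}(W)=B_{k,i}W-W\Lambda_{k,i}\qquad (i=1,2;\ k=1,3,5,\ldots), \] understood as $\partial_{k,i}-B_{k,i}=W(\partial_{k,i}-\Lambda_{k,i})W^{-1}$, where $\partial_{k,i}=\partial/\partial t_{k,i}$ and $B_{k,i}$ is the $\mathfrak{g}_{\geq0}$-component of $W\Lambda_{k,i}W^{-1}\in\widehat{\mathfrak{g}}_{<0}\oplus\mathfrak{g}_{\geq0}$. Write $B_{1,i}=\Lambda_{1,i}+U_i$ $(i=1,2)$, where $U_i$ is $\mathfrak{g}_0(s)$-valued. Then \[ (d_s\,|\,\partial_{1,i}(U_j))+\tfrac{1}{2}(U_i\,|\,U_j)=0\qquad (i,j=1,2). \]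
   Context: $\mathfrak{g}=\mathfrak{g}(D^{(1)}_4)$ is the Lie algebra generated by $e_i,f_i,\alpha_i^\vee$ $(i=0,\ldots,4)$ and $d$ with relations $(\mathrm{ad}\,e_i)^{1-a_{ij}}(e_j)=0$, $(\mathrm{ad}\,f_i)^{1-a_{ij}}(f_j)=0$ $(i\neq j)$, $[\alpha_i^\vee,\alpha_j^\vee]=0$, $[\alpha_i^\vee,e_j]=a_{ij}e_j$, $[\alpha_i^\vee,f_j]=-a_{ij}f_j$, $[e_i,f_j]=\delta_{ij}\alpha_i^\vee$, $[d,\alpha_i^\vee]=0$, $[d,e_i]=\delta_{i0}e_0$, $[d,f_i]=-\delta_{i0}f_0$, where $A=(a_{ij})$ is the Cartan matrix with $a_{ii}=2$, $a_{2j}=a_{j2}=-1$ for $j=0,1,3,4$, and all other entries $0$. $\mathfrak{h}=\bigoplus_j\mathbb{C}\alpha_j^\vee\oplus\mathbb{C}d$; $K=\alpha_0^\vee+\alpha_1^\vee+2\alpha_2^\vee+\alpha_3^\vee+\alpha_4^\vee$. The invariant form is determined by $(\alpha_i^\vee|\alpha_j^\vee)=a_{ij}$, $(e_i|f_j)=\delta_{ij}$, $(\alpha_i^\vee|e_j)=(\alpha_i^\vee|f_j)=0$, $(d|d)=0$, $(d|\alpha_j^\vee)=\delta_{0j}$, $(d|e_j)=(d|f_j)=0$. The gradation of type $s=(1,1,0,1,1)$: $\deg\mathfrak{h}=\deg e_2=\deg f_2=0$, $\deg e_i=1$, $\deg f_i=-1$ for $i=0,1,3,4$; equivalently $\mathfrak{g}_k(s)=\{x:[d_s,x]=kx\}$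 with $d_s=4d+2\alpha_1^\vee+3\alpha_2^\vee+2\alpha_3^\vee+2\alpha_4^\vee$. $\mathfrak{g}_{<0}=\bigoplus_{k<0}\mathfrak{g}_k(s)$, $\mathfrak{g}_{\ge0}=\bigoplus_{k\ge0}\mathfrak{g}_k(s)$; $\widehat{\mathfrak{g}}_{<0}$ is the completion of $\mathfrak{g}_{<0}$ and $G_{<0}=\exp(\widehat{\mathfrak{g}}_{<0})$. Write $e_{2j}=[e_2,e_j]$. $\Lambda_{1,1}=-e_0+e_1+e_3-e_{21}+e_{23}+e_{24}$, $\Lambda_{1,2}=e_1-e_3+e_4+e_{20}+e_{21}+e_{23}$. The Heisenberg subalgebra is $\mathfrak{s}=\{x\in\mathfrak{g}:[\Lambda_{1,1},x]\in\mathbb{C}K\}=\bigoplus_k\mathfrak{s}_k(s)$, with $\mathfrak{s}_{2k-1}(s)=\mathbb{C}\Lambda_{2k-1,1}\oplus\mathbb{C}\Lambda_{2k-1,2}$ for chosen elements satisfying $[\Lambda_{2k-1,i},\Lambda_{2l-1,j}]=(2k-1)\delta_{ij}\delta_{k+l,1}K$. *)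

theory Defs
  imports Complex_Main
begin

definition lie_alg :: "(complex \<Rightarrow> 'g::ab_group_add \<Rightarrow> 'g) \<Rightarrow> ('g \<Rightarrow> 'g \<Rightarrow> 'g) \<Rightarrow> bool" where
  "lie_alg sm br \<longleftrightarrow> vector_space sm
     \<and> (\<forall>x y z. br (x + y) z = br x z + br y z)
     \<and> (\<forall>c x y. br (sm c x) y = sm c (br x y))
     \<and> (\<forall>x. br x x = 0)
     \<and> (\<forall>x y z. br x (br y z) + br y (br z x) + br z (br x y) = 0)"

definition inv_form :: "(complex \<Rightarrow> 'g::ab_group_add \<Rightarrow> 'g) \<Rightarrow> ('g \<Rightarrow> 'g \<Rightarrow> 'g) \<Rightarrow> ('g \<Rightarrow> 'g \<Rightarrow> complex) \<Rightarrow> bool" where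
  "inv_form sm br B \<longleftrightarrow>
       (\<forall>x y z. B (x + y) z = B x z + B y z)
     \<and> (\<forall>c x y. B (sm c x) y = c * B x y)
     \<and> (\<forall>x y. B x y = B y x)
     \<and> (\<forall>x y z. B (br x y) z = B x (br y z))
     \<and> (\<forall>x. (\<forall>y. B x y = 0) \<longrightarrow> x = 0)"

inductive_set lie_gen :: "(complex \<Rightarrow> 'g::ab_group_add \<Rightarrow> 'g) \<Rightarrow> ('g \<Rightarrow> 'g \<Rightarrow> 'g) \<Rightarrow> 'g set \<Rightarrow> 'g set"
  for sm br S where
  gen_base: "x \<in> S \<Longrightarrow> x \<in> lie_gen sm br S"
| gen_zero: "0 \<in> lie_gen sm br S"
| gen_add: "x \<in> lie_gen sm br S \<Longrightarrow> y \<in> lie_gen sm br S \<Longrightarrow> x + y \<in> lie_gen sm br S"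
| gen_smul: "x \<in> lie_gen sm br S \<Longrightarrow> sm c x \<in> lie_gen sm br S"
| gen_br: "x \<in> lie_gen sm br S \<Longrightarrow> y \<in> lie_gen sm br S \<Longrightarrow> br x y \<in> lie_gen sm br S"

definition cartanD4 :: "nat \<Rightarrow> nat \<Rightarrow> int" where
  "cartanD4 i j = (if i = j then 2 else if i = 2 \<or> j = 2 then -1 else 0)"

text \<open>Generators e_i, f_i, alpha_i^vee (= hv i), i = 0..4, and d, satisfying the defining
  relations, generating the algebra, with h = span(alpha_i^vee, d) of dimension 6.
  (Any such Lie algebra is isomorphic to g(D4^(1)): it is a quotient of the presented
  algebra by an ideal meeting h trivially, and g(A) has no such nonzero ideal.)\<close>
definition D4_presentation :: "(complex \<Rightarrow> 'g::ab_group_add \<Rightarrow> 'g) \<Rightarrow> ('g \<Rightarrow> 'g \<Rightarrow> 'g)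
   \<Rightarrow> (nat \<Rightarrow> 'g) \<Rightarrow> (nat \<Rightarrow> 'g) \<Rightarrow> (nat \<Rightarrow> 'g) \<Rightarrow> 'g \<Rightarrow> bool" where
  "D4_presentation sm br e f hv d \<longleftrightarrow>
     (\<forall>i\<le>4. \<forall>j\<le>4. i \<noteq> j \<longrightarrow>
         ((br (e i)) ^^ nat (1 - cartanD4 i j)) (e j) = 0
       \<and> ((br (f i)) ^^ nat (1 - cartanD4 i j)) (f j) = 0)
   \<and> (\<forall>i\<le>4. \<forall>j\<le>4.
         br (hv i) (hv j) = 0
       \<and> br (hv i) (e j) = sm (of_int (cartanD4 i j)) (e j)
       \<and> br (hv i) (f j) = sm (- of_int (cartanD4 i j)) (f j)
       \<and> br (e i) (f j) = (if i = j then hv i else 0))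
   \<and> (\<forall>i\<le>4. br d (hv i) = 0
       \<and> br d (e i) = (if i = 0 then e 0 else 0)
       \<and> br d (f i) = (if i = 0 then - f 0 else 0))
   \<and> (\<forall>c :: nat \<Rightarrow> complex. (\<Sum>i\<le>4. sm (c i) (hv i)) + sm (c 5) d = 0 \<longrightarrow> (\<forall>i\<le>5. c i = 0))
   \<and> lie_gen sm br ({e i |i. i \<le> 4} \<union> {f i |i. i \<le> 4} \<union> {hv i |i. i \<le> 4} \<union> {d}) = UNIV"

definition D4_form_values :: "('g::ab_group_add \<Rightarrow> 'g \<Rightarrow> complex)
   \<Rightarrow> (nat \<Rightarrow> 'g) \<Rightarrow> (nat \<Rightarrow> 'g) \<Rightarrow> (nat \<Rightarrow> 'g) \<Rightarrow> 'g \<Rightarrow> bool" where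
  "D4_form_values B e f hv d \<longleftrightarrow>
     (\<forall>i\<le>4. \<forall>j\<le>4.
         B (hv i) (hv j) = of_int (cartanD4 i j)
       \<and> B (e i) (f j) = (if i = j then 1 else 0)
       \<and> B (hv i) (e j) = 0 \<and> B (hv i) (f j) = 0)
   \<and> B d d = 0
   \<and> (\<forall>j\<le>4. B d (hv j) = (if j = 0 then 1 else 0) \<and> B d (e j) = 0 \<and> B d (f j) = 0)"

definition centK :: "(complex \<Rightarrow> 'g::ab_group_add \<Rightarrow> 'g) \<Rightarrow> (nat \<Rightarrow> 'g) \<Rightarrow> 'g" where
  "centK sm hv = hv 0 + hv 1 + sm 2 (hv 2) + hv 3 + hv 4"

definition d_s :: "(complex \<Rightarrow> 'g::ab_group_add \<Rightarrow> 'g) \<Rightarrow> (nat \<Rightarrow> 'g) \<Rightarrow> 'g \<Rightarrow> 'g" where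
  "d_s sm hv d = sm 4 d + sm 2 (hv 1) + sm 3 (hv 2) + sm 2 (hv 3) + sm 2 (hv 4)"

definition gdeg :: "(complex \<Rightarrow> 'g::ab_group_add \<Rightarrow> 'g) \<Rightarrow> ('g \<Rightarrow> 'g \<Rightarrow> 'g) \<Rightarrow> (nat \<Rightarrow> 'g) \<Rightarrow> 'g \<Rightarrow> int \<Rightarrow> 'g set" where
  "gdeg sm br hv d k = {x. br (d_s sm hv d) x = sm (of_int k) x}"

definition Lam11 :: "('g::ab_group_add \<Rightarrow> 'g \<Rightarrow> 'g) \<Rightarrow> (nat \<Rightarrow> 'g) \<Rightarrow> 'g" where
  "Lam11 br e = - e 0 + e 1 + e 3 - br (e 2) (e 1) + br (e 2) (e 3) + br (e 2) (e 4)"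

definition Lam12 :: "('g::ab_group_add \<Rightarrow> 'g \<Rightarrow> 'g) \<Rightarrow> (nat \<Rightarrow> 'g) \<Rightarrow> 'g" where
  "Lam12 br e = e 1 - e 3 + e 4 + br (e 2) (e 0) + br (e 2) (e 1) + br (e 2) (e 3)"

definition heis :: "(complex \<Rightarrow> 'g::ab_group_add \<Rightarrow> 'g) \<Rightarrow> ('g \<Rightarrow> 'g \<Rightarrow> 'g) \<Rightarrow> (nat \<Rightarrow> 'g) \<Rightarrow> (nat \<Rightarrow> 'g) \<Rightarrow> 'g set" where
  "heis sm br e hv = {x. \<exists>c. br (Lam11 br e) x = sm c (centK sm hv)}"

definition heis_basis :: "(complex \<Rightarrow> 'g::ab_group_add \<Rightarrow> 'g) \<Rightarrow> ('g \<Rightarrow> 'g \<Rightarrow> 'g)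
   \<Rightarrow> (nat \<Rightarrow> 'g) \<Rightarrow> (nat \<Rightarrow> 'g) \<Rightarrow> 'g \<Rightarrow> (int \<Rightarrow> nat \<Rightarrow> 'g) \<Rightarrow> bool" where
  "heis_basis sm br e hv d Lam \<longleftrightarrow>
     Lam 1 1 = Lam11 br e \<and> Lam 1 2 = Lam12 br e
   \<and> (\<forall>k. odd k \<longrightarrow>
         Lam k 1 \<in> gdeg sm br hv d k \<and> Lam k 2 \<in> gdeg sm br hv d k
       \<and> heis sm br e hv \<inter> gdeg sm br hv d k = {sm a (Lam k 1) + sm b (Lam k 2) |a b. True}
       \<and> (\<forall>a b. sm a (Lam k 1) + sm b (Lam k 2) = 0 \<longrightarrow> a = 0 \<and> b = 0))
   \<and> (\<forall>k l. odd k \<and> odd l \<longrightarrow> (\<forall>i\<in>{1,2}. \<forall>j\<in>{1,2}.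
         br (Lam k i) (Lam l j) = (if i = j \<and> k + l = 0 then sm (of_int k) (centK sm hv) else 0)))"

text \<open>A formal function is given by its coefficients: F alpha is the coefficient of the
  monomial prod t_(k,i)^(alpha (k,i)).\<close>
type_synonym mon = "nat \<times> nat \<Rightarrow> nat"

definition tvars :: "(nat \<times> nat) set" where
  "tvars = {(k, i). odd k \<and> i \<in> {1, 2}}"

definition tmons :: "mon set" where
  "tmons = {\<alpha>. finite {x. \<alpha> x \<noteq> 0} \<and> {x. \<alpha> x \<noteq> 0} \<subseteq> tvars}"

definition fconst :: "'a::zero \<Rightarrow> mon \<Rightarrow> 'a" where
  "fconst X = (\<lambda>\<alpha>. if \<alpha> = (\<lambda>_. 0) then X else 0)"

definition fprod :: "('a \<Rightarrow> 'b \<Rightarrow> 'c::comm_monoid_add) \<Rightarrow> (mon \<Rightarrow> 'a) \<Rightarrow> (mon \<Rightarrow> 'b) \<Rightarrow> mon \<Rightarrow> 'c" where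
  "fprod p F G = (\<lambda>\<alpha>. \<Sum>\<beta>\<in>{\<beta>. \<forall>x. \<beta> x \<le> \<alpha> x}. p (F \<beta>) (G (\<lambda>x. \<alpha> x - \<beta> x)))"

definition fdiff :: "(complex \<Rightarrow> 'g \<Rightarrow> 'g) \<Rightarrow> nat \<times> nat \<Rightarrow> (mon \<Rightarrow> 'g) \<Rightarrow> mon \<Rightarrow> 'g" where
  "fdiff sm kk F = (\<lambda>\<alpha>. sm (of_nat (\<alpha> kk + 1)) (F (\<alpha>(kk := \<alpha> kk + 1))))"

section \<open>W = exp(w), w = sum_(n>=1) w_(-n) in the completion of g_(<0)\<close>

text \<open>w n is the (time dependent) component of w of degree -n.
  adch w [c1,...,cr] F = ad(w c1) ... ad(w cr) F.\<close>
fun adch :: "('g \<Rightarrow> 'g \<Rightarrow> 'g::comm_monoid_add) \<Rightarrow> (nat \<Rightarrow> mon \<Rightarrow> 'g) \<Rightarrow> nat list \<Rightarrow> (mon \<Rightarrow> 'g) \<Rightarrow> mon \<Rightarrow> 'g" where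
  "adch br w [] F = F"
| "adch br w (c # cs) F = fprod br (w c) (adch br w cs F)"

definition comps :: "nat \<Rightarrow> nat list set" where
  "comps N = {c. (\<forall>x\<in>set c. 1 \<le> x) \<and> sum_list c = N}"

text \<open>Component of degree (deg X - N) of W X W^(-1) = exp(ad w) X, for homogeneous X.\<close>
definition Ad_comp :: "(complex \<Rightarrow> 'g::ab_group_add \<Rightarrow> 'g) \<Rightarrow> ('g \<Rightarrow> 'g \<Rightarrow> 'g) \<Rightarrow> (nat \<Rightarrow> mon \<Rightarrow> 'g)
    \<Rightarrow> 'g \<Rightarrow> nat \<Rightarrow> mon \<Rightarrow> 'g" where
  "Ad_comp sm br w X N = (\<lambda>\<alpha>. \<Sum>c\<in>comps N. sm (1 / fact (length c)) (adch br w c (fconst X) \<alpha>))"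

text \<open>Component of degree -N of (d_kk W) W^(-1) = sum_n (ad w)^n (d_kk w) / (n+1)!.\<close>
definition dlog_comp :: "(complex \<Rightarrow> 'g::ab_group_add \<Rightarrow> 'g) \<Rightarrow> ('g \<Rightarrow> 'g \<Rightarrow> 'g) \<Rightarrow> (nat \<Rightarrow> mon \<Rightarrow> 'g)
    \<Rightarrow> nat \<times> nat \<Rightarrow> nat \<Rightarrow> mon \<Rightarrow> 'g" where
  "dlog_comp sm br w kk N = (\<lambda>\<alpha>. \<Sum>(c, m)\<in>{(c, m). (\<forall>x\<in>set c. 1 \<le> x) \<and> 1 \<le> m \<and> sum_list c + m = N}.
      sm (1 / fact (length c + 1)) (adch br w c (fdiff sm kk (w m)) \<alpha>))"

text \<open>B_(k,i) = (W Lam_(k,i) W^(-1))_(>=0): the components of degrees k, k-1, ..., 0.\<close>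
definition Bop :: "(complex \<Rightarrow> 'g::ab_group_add \<Rightarrow> 'g) \<Rightarrow> ('g \<Rightarrow> 'g \<Rightarrow> 'g) \<Rightarrow> (nat \<Rightarrow> mon \<Rightarrow> 'g)
    \<Rightarrow> 'g \<Rightarrow> nat \<Rightarrow> mon \<Rightarrow> 'g" where
  "Bop sm br w X k = (\<lambda>\<alpha>. \<Sum>N\<le>k. Ad_comp sm br w X N \<alpha>)"

definition Ufun :: "(complex \<Rightarrow> 'g::ab_group_add \<Rightarrow> 'g) \<Rightarrow> ('g \<Rightarrow> 'g \<Rightarrow> 'g) \<Rightarrow> (nat \<Rightarrow> mon \<Rightarrow> 'g)
    \<Rightarrow> (int \<Rightarrow> nat \<Rightarrow> 'g) \<Rightarrow> nat \<Rightarrow> mon \<Rightarrow> 'g" where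
  "Ufun sm br w Lam i = (\<lambda>\<alpha>. Bop sm br w (Lam 1 i) 1 \<alpha> - fconst (Lam 1 i) \<alpha>)"

text \<open>Sato equations d_(k,i) - B_(k,i) = W (d_(k,i) - Lam_(k,i)) W^(-1), i.e.
  B_(k,i) = (d_(k,i) W) W^(-1) + W Lam_(k,i) W^(-1). Since B is the part of degree >= 0
  and (d W) W^(-1) has only negative degrees, this amounts to: every component of degree
  -N (N >= 1) of (d_(k,i) W) W^(-1) + W Lam_(k,i) W^(-1) vanishes.\<close>
definition sato_eqs :: "(complex \<Rightarrow> 'g::ab_group_add \<Rightarrow> 'g) \<Rightarrow> ('g \<Rightarrow> 'g \<Rightarrow> 'g)
   \<Rightarrow> (nat \<Rightarrow> 'g) \<Rightarrow> 'g \<Rightarrow> (int \<Rightarrow> nat \<Rightarrow> 'g) \<Rightarrow> (nat \<Rightarrow> mon \<Rightarrow> 'g) \<Rightarrow> bool" where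
  "sato_eqs sm br hv d Lam w \<longleftrightarrow>
     w 0 = (\<lambda>_. 0)
   \<and> (\<forall>n \<alpha>. w n \<alpha> \<in> gdeg sm br hv d (- int n))
   \<and> (\<forall>n \<alpha>. \<alpha> \<notin> tmons \<longrightarrow> w n \<alpha> = 0)
   \<and> (\<forall>k i N. odd k \<and> i \<in> {1, 2} \<and> 1 \<le> N \<longrightarrow>
        (\<forall>\<alpha>\<in>tmons. dlog_comp sm br w (k, i) N \<alpha> + Ad_comp sm br w (Lam (int k) i) (k + N) \<alpha> = 0))"

end

theory Submission
  imports Defs
begin

text \<open>Writing \<open>W = exp w\<close> with \<open>w = w\<^sub>1 + w\<^sub>2 + \<dots>\<close>,
  \<open>w\<^sub>n\<close> of degree \<open>-n\<close>, one has \<open>U\<^sub>j = [w\<^sub>1, \<Lambda>\<^sub>1\<^sub>j]\<close>, and the component of degree \<open>-1\<close> of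
  the equation for \<open>t\<^sub>1\<^sub>i\<close> reads
  \<open>\<partial>\<^sub>1\<^sub>i w\<^sub>1 + [w\<^sub>2, \<Lambda>\<^sub>1\<^sub>i] + [w\<^sub>1, U\<^sub>i]/2 = 0\<close>.
  Since \<open>\<partial>\<^sub>1\<^sub>i w\<^sub>1\<close> has degree \<open>-1\<close>, invariance of the form gives
  \<open>(d\<^sub>s | \<partial>\<^sub>1\<^sub>i U\<^sub>j) = ([d\<^sub>s, \<partial>\<^sub>1\<^sub>i w\<^sub>1] | \<Lambda>\<^sub>1\<^sub>j) = -(\<partial>\<^sub>1\<^sub>i w\<^sub>1 | \<Lambda>\<^sub>1\<^sub>j)\<close>, and
  \<open>([w\<^sub>2, \<Lambda>\<^sub>1\<^sub>i] | \<Lambda>\<^sub>1\<^sub>j) = (w\<^sub>2 | [\<Lambda>\<^sub>1\<^sub>i, \<Lambda>\<^sub>1\<^sub>j]) = 0\<close>,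
  \<open>([w\<^sub>1, U\<^sub>i] | \<Lambda>\<^sub>1\<^sub>j) = -(U\<^sub>i | [w\<^sub>1, \<Lambda>\<^sub>1\<^sub>j]) = -(U\<^sub>i | U\<^sub>j)\<close>.
  Beyond the invariance of the form, the argument uses only that \<open>\<Lambda>\<^sub>1\<^sub>1\<close> and \<open>\<Lambda>\<^sub>1\<^sub>2\<close>
  commute.\<close>

lemma length_le_sum_list: "(\<forall>x\<in>set c. (1::nat) \<le> x) \<Longrightarrow> length c \<le> sum_list c"
  by (induction c) auto

lemma comps_0: "comps 0 = {[]}"
proof -
  have "c = []" if "\<forall>x\<in>set c. (1::nat) \<le> x" "sum_list c = 0" for c
    using length_le_sum_list[OF that(1)] that(2) by simp
  then show ?thesis by (auto simp: comps_def)
qed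

lemma comps_1: "comps 1 = {[1]}"
proof -
  have "c = [1]" if "\<forall>x\<in>set c. (1::nat) \<le> x" "sum_list c = 1" for c
    using that length_le_sum_list[OF that(1)] by (cases c rule: remdups_adj.cases) auto
  then show ?thesis by (auto simp: comps_def)
qed

lemma comps_2: "comps 2 = {[2], [1, 1]}"
proof -
  have "c = [2] \<or> c = [1, 1]" if "\<forall>x\<in>set c. (1::nat) \<le> x" "sum_list c = 2" for c
    using that length_le_sum_list[OF that(1)] by (cases c rule: remdups_adj.cases) auto
  then show ?thesis by (auto simp: comps_def)
qed

lemma dlog_index_set_1:
  "{(c, m). (\<forall>x\<in>set c. (1::nat) \<le> x) \<and> 1 \<le> m \<and> sum_list c + m = 1} = {([], 1)}"
proof -
  have "sum_list c = 0 \<and> m = 1" if "1 \<le> m" "sum_list c + m = (1::nat)" for c m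
    using that by linarith
  then show ?thesis using comps_0 by (auto simp: comps_def)
qed

lemma finite_dominated_mons:
  assumes "finite {x. (\<alpha>::mon) x \<noteq> 0}"
  shows "finite {\<beta>::mon. \<forall>x. \<beta> x \<le> \<alpha> x}"
proof (rule finite_subset)
  let ?S = "{x. \<alpha> x \<noteq> 0}"
  let ?F = "{f. \<forall>x. (x \<in> ?S \<longrightarrow> f x \<in> {..sum \<alpha> ?S}) \<and> (x \<notin> ?S \<longrightarrow> f x = (0::nat))}"
  have "\<beta> \<in> ?F" if le: "\<forall>x. \<beta> x \<le> \<alpha> x" for \<beta> :: mon
  proof -
    have "\<beta> x \<le> sum \<alpha> ?S" if "x \<in> ?S" for x
      using le member_le_sum[OF that, of \<alpha>] assms by (blast intro: order_trans)
    moreover have "\<beta> x = 0" if "x \<notin> ?S" for x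
      using le that by (metis le_zero_eq mem_Collect_eq)
    ultimately show ?thesis by simp
  qed
  then show "{\<beta>::mon. \<forall>x. \<beta> x \<le> \<alpha> x} \<subseteq> ?F" by blast
  show "finite ?F"
    by (rule finite_set_of_finite_funs) (use assms in auto)
qed

lemma fprod_fconst_right:
  assumes "finite {x. (\<alpha>::mon) x \<noteq> 0}" and "\<And>a. p a 0 = (0::'c::comm_monoid_add)"
  shows "fprod p F (fconst X) \<alpha> = p (F \<alpha>) X"
proof -
  let ?L = "{\<beta>::mon. \<forall>x. \<beta> x \<le> \<alpha> x}"
  have "p (F \<beta>) (fconst X (\<lambda>x. \<alpha> x - \<beta> x)) = 0" if "\<beta> \<in> ?L - {\<alpha>}" for \<beta>
  proof -
    from that have le: "\<forall>x. \<beta> x \<le> \<alpha> x" and "\<beta> \<noteq> \<alpha>" by auto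
    then obtain x where "\<beta> x \<noteq> \<alpha> x" by (metis ext)
    with le have "\<alpha> x - \<beta> x \<noteq> 0" by (metis diff_is_0_eq le_antisym)
    then have "(\<lambda>x. \<alpha> x - \<beta> x) \<noteq> (\<lambda>_. 0)" by metis
    then show ?thesis by (simp add: fconst_def assms(2))
  qed
  then have "fprod p F (fconst X) \<alpha> = p (F \<alpha>) (fconst X (\<lambda>x. \<alpha> x - \<alpha> x))"
    unfolding fprod_def using finite_dominated_mons[OF assms(1)]
    by (subst sum.remove[of _ \<alpha>]) auto
  then show ?thesis by (simp add: fconst_def)
qed

lemma diff_diff_cancel_fun: "\<forall>x. \<beta> x \<le> \<alpha> x \<Longrightarrow> (\<lambda>x. \<alpha> x - (\<alpha> x - \<beta> x)) = (\<beta> :: 'a \<Rightarrow> nat)"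
  by (simp add: fun_eq_iff)

lemma fprod_commute: "fprod p F G \<alpha> = fprod (\<lambda>a b. p b a) G F \<alpha>"
  unfolding fprod_def
  by (rule sum.reindex_bij_witness[where i="\<lambda>\<beta> x. \<alpha> x - \<beta> x" and j="\<lambda>\<beta> x. \<alpha> x - \<beta> x"])
    (simp_all add: diff_diff_cancel_fun)

lemma fprod_cong_right:
  assumes "\<And>\<beta>. \<forall>x. \<beta> x \<le> \<alpha> x \<Longrightarrow> G \<beta> = G' \<beta>"
  shows "fprod p F G \<alpha> = fprod p F G' \<alpha>"
  unfolding fprod_def using assms by (intro sum.cong) auto

locale lie_algebra_invariant_form =
  fixes sm :: "complex \<Rightarrow> 'g::ab_group_add \<Rightarrow> 'g"
    and br :: "'g \<Rightarrow> 'g \<Rightarrow> 'g"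
    and B :: "'g \<Rightarrow> 'g \<Rightarrow> complex"
  assumes lie_alg: "lie_alg sm br"
    and inv_form: "inv_form sm br B"
begin

sublocale vector_space sm
  using lie_alg by (simp add: lie_alg_def)

lemma bracket_add_left: "br (x + y) z = br x z + br y z"
  and bracket_scale_left: "br (sm c x) y = sm c (br x y)"
  and bracket_self: "br x x = 0"
  using lie_alg unfolding lie_alg_def by blast+

lemma form_add_left: "B (x + y) z = B x z + B y z"
  and form_scale_left: "B (sm c x) y = c * B x y"
  and form_commute: "B x y = B y x"
  and form_bracket: "B (br x y) z = B x (br y z)"
  and form_nondegenerate: "(\<And>y. B x y = 0) \<Longrightarrow> x = 0"
  using inv_form unfolding inv_form_def by metis+

lemma form_zero_left: "B 0 z = 0"
  using form_add_left[of 0 0 z] by simp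

lemma form_zero_right: "B x 0 = 0"
  by (simp add: form_commute[of x] form_zero_left)

lemma form_minus_left: "B (- x) z = - B x z"
  using form_add_left[of "- x" x z] by (simp add: form_zero_left eq_neg_iff_add_eq_0)

lemma form_diff_left: "B (x - y) z = B x z - B y z"
  using form_add_left[of x "- y" z] by (simp add: form_minus_left)

lemma form_add_right: "B x (y + z) = B x y + B x z"
  by (simp add: form_commute[of x] form_add_left)

lemma form_sum_left: "B (sum g S) z = (\<Sum>a\<in>S. B (g a) z)"
  by (induction S rule: infinite_finite_induct) (simp_all add: form_zero_left form_add_left)

text \<open>Additivity in the second argument is not among the axioms of \<^const>\<open>lie_alg\<close>;
  it follows from nondegeneracy and invariance of the form.\<close>
lemma bracket_add_right: "br x (y + z) = br x y + br x z"
proof -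
  have swap: "B (br x v) u = B (br u x) v" for u v
    by (metis form_bracket form_commute)
  have "B (br x (y + z) - (br x y + br x z)) u = 0" for u
    by (simp add: form_diff_left form_add_left form_add_right
        swap[where v = "y + z"] swap[where v = y] swap[where v = z])
  then show ?thesis
    using form_nondegenerate by fastforce
qed

lemma bracket_zero_right: "br x 0 = 0"
  using bracket_add_right[of x 0 0] by simp

lemma bracket_anticommute: "br x y = - br y x"
proof -
  have "0 = br (x + y) (x + y)"
    by (simp only: bracket_self)
  also have "\<dots> = br x y + br y x"
    by (simp only: bracket_add_left bracket_add_right) (simp add: bracket_self)
  finally have "br x y + br y x = 0" by simp
  then show ?thesis
    by (simp add: eq_neg_iff_add_eq_0)
qed

lemma bracket_scale_right: "br x (sm c y) = sm c (br x y)"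
  by (simp add: bracket_anticommute[of x] bracket_scale_left)

lemma form_bracket_eigenvector:
  assumes "br D x = sm c x"
  shows "B D (br x y) = c * B x y"
  by (simp add: form_bracket[symmetric] assms form_scale_left)

lemma form_fprod_bracket_left:
  "B (fprod br F G \<alpha>) Y = - fprod B G (\<lambda>\<beta>. br (F \<beta>) Y) \<alpha>"
proof -
  have "B (fprod br F G \<alpha>) Y = - fprod (\<lambda>a b. B b a) (\<lambda>\<beta>. br (F \<beta>) Y) G \<alpha>"
    unfolding fprod_def form_sum_left
    by (simp add: bracket_anticommute[of "F _"] form_minus_left form_bracket sum_negf)
  also have "\<dots> = - fprod B G (\<lambda>\<beta>. br (F \<beta>) Y) \<alpha>"
    by (simp only: fprod_commute[of B G])
  finally show ?thesis .
qed

lemma Ad_comp_0: "Ad_comp sm br w X 0 = fconst X"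
  unfolding Ad_comp_def comps_0 by (simp add: fun_eq_iff)

lemma Ad_comp_1: "Ad_comp sm br w X 1 = fprod br (w 1) (fconst X)"
  unfolding Ad_comp_def comps_1 by (simp add: fun_eq_iff)

lemma Ad_comp_2:
  assumes "finite {x. \<gamma> x \<noteq> 0}"
  shows "Ad_comp sm br w X 2 \<gamma>
    = br (w 2 \<gamma>) X + sm (1/2) (fprod br (w 1) (fprod br (w 1) (fconst X)) \<gamma>)"
  unfolding Ad_comp_def comps_2
  by (simp add: fprod_fconst_right[OF assms] bracket_zero_right)

lemma dlog_comp_1: "dlog_comp sm br w kk 1 = fdiff sm kk (w 1)"
  unfolding dlog_comp_def dlog_index_set_1 by (simp add: fun_eq_iff)

lemma Ufun_eq_fprod: "Ufun sm br w Lam j = fprod br (w 1) (fconst (Lam 1 j))"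
proof -
  have Bop_1: "Bop sm br w X 1 \<gamma> = Ad_comp sm br w X 0 \<gamma> + Ad_comp sm br w X 1 \<gamma>" for X \<gamma>
    unfolding Bop_def by (simp add: atMost_Suc)
  show ?thesis
    unfolding Ufun_def Bop_1 Ad_comp_0 Ad_comp_1 by (simp add: fun_eq_iff)
qed

lemma Ufun_eq_bracket:
  assumes "finite {x. \<gamma> x \<noteq> 0}"
  shows "Ufun sm br w Lam j \<gamma> = br (w 1 \<gamma>) (Lam 1 j)"
  by (simp add: Ufun_eq_fprod fprod_fconst_right[OF assms] bracket_zero_right)

lemma fdiff_Ufun:
  assumes "finite {x. \<alpha> x \<noteq> 0}"
  shows "fdiff sm kk (Ufun sm br w Lam j) \<alpha> = br (fdiff sm kk (w 1) \<alpha>) (Lam 1 j)"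
proof -
  have "finite {x. (\<alpha>(kk := \<alpha> kk + 1)) x \<noteq> 0}"
    by (rule finite_subset[of _ "insert kk {x. \<alpha> x \<noteq> 0}"]) (use assms in auto)
  then show ?thesis
    unfolding fdiff_def by (simp add: Ufun_eq_bracket bracket_scale_left)
qed

lemma fdiff_mem_gdeg:
  assumes "\<And>\<gamma>. F \<gamma> \<in> gdeg sm br hv d k"
  shows "fdiff sm kk F \<alpha> \<in> gdeg sm br hv d k"
  using assms unfolding fdiff_def gdeg_def by (simp add: bracket_scale_right scale_left_commute)

lemma sato_eqs_degree_minus_one:
  assumes sato: "sato_eqs sm br hv d Lam w" and i: "i \<in> {1, 2}" and \<alpha>: "\<alpha> \<in> tmons"
  shows "fdiff sm (1, i) (w 1) \<alpha> + br (w 2 \<alpha>) (Lam 1 i)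
    + sm (1/2) (fprod br (w 1) (Ufun sm br w Lam i) \<alpha>) = 0"
proof -
  have fin: "finite {x. \<alpha> x \<noteq> 0}"
    using \<alpha> by (simp add: tmons_def)
  have sato_all: "\<forall>k i N. odd k \<and> i \<in> {1, 2} \<and> 1 \<le> N \<longrightarrow> (\<forall>\<alpha>\<in>tmons.
      dlog_comp sm br w (k, i) N \<alpha> + Ad_comp sm br w (Lam (int k) i) (k + N) \<alpha> = 0)"
    using sato unfolding sato_eqs_def by blast
  have "dlog_comp sm br w (1, i) 1 \<alpha> + Ad_comp sm br w (Lam (int 1) i) (1 + 1) \<alpha> = 0"
    by (rule sato_all[rule_format]) (use i \<alpha> in simp_all)
  then show ?thesis
    unfolding of_nat_1 one_add_one dlog_comp_1 Ad_comp_2[OF fin] Ufun_eq_fprod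
    by (simp add: add.assoc)
qed

lemma form_d_s_fdiff_Ufun:
  assumes sato: "sato_eqs sm br hv d Lam w" and i: "i \<in> {1, 2}"
    and commute: "br (Lam 1 i) (Lam 1 j) = 0" and \<alpha>: "\<alpha> \<in> tmons"
  shows "B (d_s sm hv d) (fdiff sm (1, i) (Ufun sm br w Lam j) \<alpha>)
    + 1 / 2 * fprod B (Ufun sm br w Lam i) (Ufun sm br w Lam j) \<alpha> = 0"
proof -
  let ?U = "Ufun sm br w Lam"
  define X where "X = fdiff sm (1, i) (w 1) \<alpha>"
  have fin: "finite {x. \<alpha> x \<noteq> 0}"
    using \<alpha> by (simp add: tmons_def)
  have "w n \<gamma> \<in> gdeg sm br hv d (- int n)" for n \<gamma>
    using sato unfolding sato_eqs_def by blast
  then have "X \<in> gdeg sm br hv d (-1)"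
    unfolding X_def by (metis fdiff_mem_gdeg of_nat_1)
  then have deg: "br (d_s sm hv d) X = sm (-1) X"
    by (simp add: gdeg_def)
  have X: "X = - (br (w 2 \<alpha>) (Lam 1 i) + sm (1/2) (fprod br (w 1) (?U i) \<alpha>))"
    using sato_eqs_degree_minus_one[OF sato i \<alpha>] unfolding X_def eq_neg_iff_add_eq_0
    by (simp only: add.assoc)
  have "B (d_s sm hv d) (fdiff sm (1, i) (?U j) \<alpha>) = - B X (Lam 1 j)"
    unfolding fdiff_Ufun[OF fin] X_def[symmetric] form_bracket_eigenvector[OF deg] by simp
  also have "\<dots> = B (w 2 \<alpha>) (br (Lam 1 i) (Lam 1 j))
      + 1/2 * B (fprod br (w 1) (?U i) \<alpha>) (Lam 1 j)"
    unfolding X by (simp add: form_minus_left form_diff_left form_scale_left form_bracket)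
  also have "\<dots> = - 1/2 * fprod B (?U i) (\<lambda>\<beta>. br (w 1 \<beta>) (Lam 1 j)) \<alpha>"
    unfolding commute form_zero_right form_fprod_bracket_left by simp
  also have "fprod B (?U i) (\<lambda>\<beta>. br (w 1 \<beta>) (Lam 1 j)) \<alpha> = fprod B (?U i) (?U j) \<alpha>"
  proof (rule fprod_cong_right)
    fix \<beta> :: mon
    assume "\<forall>x. \<beta> x \<le> \<alpha> x"
    then have "{x. \<beta> x \<noteq> 0} \<subseteq> {x. \<alpha> x \<noteq> 0}"
      by (metis (mono_tags) le_zero_eq mem_Collect_eq subsetI)
    then show "br (w 1 \<beta>) (Lam 1 j) = ?U j \<beta>"
      using Ufun_eq_bracket finite_subset[OF _ fin] by metis
  qed
  finally show ?thesis
    by simp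
qed

end

theorem lemma2p1:
  fixes sm :: "complex \<Rightarrow> 'g::ab_group_add \<Rightarrow> 'g"
    and br :: "'g \<Rightarrow> 'g \<Rightarrow> 'g"
    and B :: "'g \<Rightarrow> 'g \<Rightarrow> complex"
    and e f hv :: "nat \<Rightarrow> 'g" and d :: 'g
    and Lam :: "int \<Rightarrow> nat \<Rightarrow> 'g"
    and w :: "nat \<Rightarrow> mon \<Rightarrow> 'g"
  assumes "lie_alg sm br"
    and "D4_presentation sm br e f hv d"
    and "inv_form sm br B"
    and "D4_form_values B e f hv d"
    and "heis_basis sm br e hv d Lam"
    and "sato_eqs sm br hv d Lam w"
  shows "\<forall>i\<in>{1, 2}. \<forall>j\<in>{1, 2}. \<forall>\<alpha>\<in>tmons.
           B (d_s sm hv d) (fdiff sm (1, i) (Ufun sm br w Lam j) \<alpha>)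
           + 1 / 2 * fprod B (Ufun sm br w Lam i) (Ufun sm br w Lam j) \<alpha> = 0"
proof (intro ballI)
  fix i j \<alpha>
  assume i: "i \<in> {1::nat, 2}" and j: "j \<in> {1::nat, 2}" and \<alpha>: "\<alpha> \<in> tmons"
  interpret lie_algebra_invariant_form sm br B
    using assms(1,3) by unfold_locales
  have "\<forall>k l. odd k \<and> odd l \<longrightarrow> (\<forall>i\<in>{1,2}. \<forall>j\<in>{1,2}. br (Lam k i) (Lam l j)
      = (if i = j \<and> k + l = 0 then sm (of_int k) (centK sm hv) else 0))"
    using assms(5) unfolding heis_basis_def by blast
  from this[rule_format, of 1 1 i j] have "br (Lam 1 i) (Lam 1 j) = 0"
    using i j by simp
  then show "B (d_s sm hv d) (fdiff sm (1, i) (Ufun sm br w Lam j) \<alpha>)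
      + 1 / 2 * fprod B (Ufun sm br w Lam i) (Ufun sm br w Lam j) \<alpha> = 0"
    by (rule form_d_s_fdiff_Ufun[OF assms(6) i _ \<alpha>])
qed

end
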